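(* Let $X$ be a Tychonoff space and $\mathcal{H}$ a subspace with $\mathcal{F}_2(X)\subset\mathcal{H}\subset\mathcal{K}(X)$. If $\mathcal{H}$ is an $F'$-space, then $X$ is a $P$-space.
   Context: $\mathcal{K}(X)$ is the set of nonempty compact subsets of $X$ with the Vietoris topology (generated by $U^+=\{A: A\subset U\}$ and $U^-=\{A: A\cap U\neq\emptyset\}$ for $U$ open in $X$), and $\mathcal{F}_2(X)$ its subspace of nonempty subsets with at most $2$ points. A $P$-space is a space in which every point lies in the interior of every $G_\delta$ set containing it. A cozero set is the complement of a zero set $f^{-1}(0)$ of a continuous real-valued function; an $F'$-space is a Tychonoff space in which any two disjoint cozero sets have disjoint closures. *)

theory Defs
  imports "HOL-Analysis.Analysis"
begin

definition tychonoff_space :: "'a topology \<Rightarrow> bool" where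
  "tychonoff_space X \<longleftrightarrow> completely_regular_space X \<and> t1_space X"

definition p_space :: "'a topology \<Rightarrow> bool" where
  "p_space X \<longleftrightarrow> (\<forall>G x. gdelta_in X G \<and> x \<in> G \<longrightarrow> x \<in> X interior_of G)"

definition cozero_set_in :: "'a topology \<Rightarrow> 'a set \<Rightarrow> bool" where
  "cozero_set_in X C \<longleftrightarrow>
     (\<exists>f. continuous_map X euclideanreal f \<and> C = topspace X - {x \<in> topspace X. f x = 0})"

definition F'_space :: "'a topology \<Rightarrow> bool" where
  "F'_space X \<longleftrightarrow> tychonoff_space X \<and>
     (\<forall>C D. cozero_set_in X C \<and> cozero_set_in X D \<and> C \<inter> D = {}
        \<longrightarrow> (X closure_of C) \<inter> (X closure_of D) = {})"

definition hyp_K :: "'a topology \<Rightarrow> 'a set set" where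
  "hyp_K X = {A. compactin X A \<and> A \<noteq> {}}"

definition hyp_F2 :: "'a topology \<Rightarrow> 'a set set" where
  "hyp_F2 X = {A. A \<subseteq> topspace X \<and> A \<noteq> {} \<and> finite A \<and> card A \<le> 2}"

definition vietoris :: "'a topology \<Rightarrow> 'a set topology" where
  "vietoris X = subtopology
     (topology_generated_by
        ({{A. A \<subseteq> U} | U. openin X U} \<union> {{A. A \<inter> U \<noteq> {}} | U. openin X U}))
     (hyp_K X)"

end

theory Submission
  imports Defs
begin

text \<open>
  If X is not a P-space, complete regularity yields a continuous g with g p = 0 such that
  p lies in the closure of {g > 0}. On the hyperspace the function
  A \<mapsto> max g(A) - 2 min g(A) is continuous; it is negative on the singletons {x} and
  positive on the pairs {x, p} whenever g x > 0. Both families of sets converge to {p} as x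
  tends to p, so {p} lies in the closure of both the cozero set where this function is
  negative and the one where it is positive, which are disjoint: H is not an F'-space.
\<close>

lemma continuous_map_suminf_real:
  fixes f :: "nat \<Rightarrow> 'a \<Rightarrow> real"
  assumes "\<And>n. continuous_map X euclideanreal (f n)"
    and "\<And>n x. x \<in> topspace X \<Longrightarrow> \<bar>f n x\<bar> \<le> M n" and "summable M"
  shows "continuous_map X euclideanreal (\<lambda>x. \<Sum>n. f n x)"
proof -
  have "uniform_limit (topspace X) (\<lambda>N x. \<Sum>n<N. f n x) (\<lambda>x. \<Sum>n. f n x) sequentially"
    using assms(2,3) by (intro Weierstrass_m_test) auto
  then have "continuous_map X Met_TC.mtopology (\<lambda>x. \<Sum>n. f n x)"
    by (intro Met_TC.continuous_map_uniform_limit[where F=sequentially])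
       (auto simp: assms(1) continuous_map_sum dest: uniform_limitD)
  then show ?thesis by simp
qed

lemma completely_regular_gdelta_contains_zero_set:
  assumes "completely_regular_space X" "gdelta_in X G" "p \<in> G"
  obtains g where "continuous_map X euclideanreal g" "\<And>x. x \<in> topspace X \<Longrightarrow> 0 \<le> g x"
    "g p = 0" "{x \<in> topspace X. g x = 0} \<subseteq> G"
proof -
  obtain C :: "nat \<Rightarrow> 'a set" where C: "\<And>n. openin X (C n)" "\<Inter>(range C) = G"
    using assms(2) unfolding gdelta_in_descending by blast
  have p: "p \<in> topspace X" "\<And>n. p \<in> C n"
    using assms(2,3) C(2) gdelta_in_subset by blast+
  have "\<exists>h::'a\<Rightarrow>real. continuous_map X (top_of_set {0..1}) h \<and> h p = 0 \<and> h ` (topspace X - C n) \<subseteq> {1}"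
    for n using assms(1) p C(1) unfolding completely_regular_space_def by blast
  then obtain f :: "nat \<Rightarrow> 'a \<Rightarrow> real" where
    f: "\<And>n. continuous_map X (top_of_set {0..1}) (f n)" "\<And>n. f n p = 0"
       "\<And>n. f n ` (topspace X - C n) \<subseteq> {1}"
    by metis
  have f_real: "continuous_map X euclideanreal (f n)" for n
    using f(1) continuous_map_in_subtopology by blast
  have f01: "0 \<le> f n x" "f n x \<le> 1" if "x \<in> topspace X" for n x
    using f(1)[of n] that by (auto simp: continuous_map_in_subtopology)
  define g where "g x = (\<Sum>n. (1/2)^n * f n x)" for x
  have summable: "summable (\<lambda>n. (1/2::real)^n * f n x)" if "x \<in> topspace X" for x
    by (rule summable_comparison_test'[of "\<lambda>n. (1/2::real)^n"]) (use f01[OF that] in auto)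
  show thesis
  proof
    show "continuous_map X euclideanreal g"
      unfolding g_def using f01
      by (intro continuous_map_suminf_real[where M="\<lambda>n. (1/2)^n"] continuous_map_real_mult_left f_real) auto
    show "0 \<le> g x" if "x \<in> topspace X" for x
      unfolding g_def using summable[OF that] f01[OF that] by (intro suminf_nonneg) auto
    show "g p = 0"
      by (simp add: g_def f(2))
    show "{x \<in> topspace X. g x = 0} \<subseteq> G"
    proof clarify
      fix x assume x: "x \<in> topspace X" "g x = 0"
      then have "f n x = 0" for n
        using suminf_eq_zero_iff[OF summable] f01 unfolding g_def by auto
      then have "x \<in> C n" for n
        using f(3)[of n] x(1) by fastforce
      then show "x \<in> G" using C(2) by blast
    qed
  qed
qed

lemma not_p_space_witness:
  assumes "completely_regular_space X" "\<not> p_space X"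
  obtains p g where "p \<in> topspace X" "continuous_map X euclideanreal g" "g p = 0"
    "p \<in> X closure_of {x \<in> topspace X. 0 < g x}"
proof -
  obtain G p where G: "gdelta_in X G" "p \<in> G" "p \<notin> X interior_of G"
    using assms(2) unfolding p_space_def by blast
  obtain g where g: "continuous_map X euclideanreal g" "\<And>x. x \<in> topspace X \<Longrightarrow> 0 \<le> g x"
    "g p = 0" "{x \<in> topspace X. g x = 0} \<subseteq> G"
    using completely_regular_gdelta_contains_zero_set[OF assms(1) G(1,2)] by blast
  have "p \<in> X closure_of {x \<in> topspace X. 0 < g x}"
  proof (rule ccontr)
    assume "p \<notin> X closure_of {x \<in> topspace X. 0 < g x}"
    then have "p \<in> X interior_of {x \<in> topspace X. g x = 0}"
      using G(1,2) gdelta_in_subset g(2)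
      by (force simp: interior_of_closure_of closure_of_def order.order_iff_strict)
    then show False
      using G(3) g(4) interior_of_mono by blast
  qed
  then show thesis
    using that G(1,2) gdelta_in_subset g(1,3) by blast
qed

definition vietoris_subbasis :: "'a topology \<Rightarrow> 'a set set set" where
  "vietoris_subbasis X = {{A. A \<subseteq> U} | U. openin X U} \<union> {{A. A \<inter> U \<noteq> {}} | U. openin X U}"

lemma subtopology_vietoris:
  assumes "H \<subseteq> hyp_K X"
  shows "subtopology (vietoris X) H = subtopology (topology_generated_by (vietoris_subbasis X)) H"
  using assms by (simp add: vietoris_def vietoris_subbasis_def subtopology_subtopology Int_absorb1)

lemma topspace_subtopology_vietoris:
  assumes "H \<subseteq> hyp_K X"
  shows "topspace (subtopology (vietoris X) H) = H"
proof -
  have "{A. A \<subseteq> topspace X} \<in> vietoris_subbasis X"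
    by (auto simp: vietoris_subbasis_def)
  moreover have "H \<subseteq> {A. A \<subseteq> topspace X}"
    using assms compactin_subset_topspace by (auto simp: hyp_K_def)
  ultimately show ?thesis
    by (auto simp: subtopology_vietoris[OF assms])
qed

lemma openin_vietoris_upper:
  assumes "H \<subseteq> hyp_K X" "openin X U"
  shows "openin (subtopology (vietoris X) H) {A \<in> H. A \<subseteq> U}"
proof -
  have "openin (topology_generated_by (vietoris_subbasis X)) {A. A \<subseteq> U}"
    using assms(2) by (intro topology_generated_by_Basis) (auto simp: vietoris_subbasis_def)
  then show ?thesis
    unfolding subtopology_vietoris[OF assms(1)] openin_subtopology by blast
qed

lemma openin_vietoris_lower:
  assumes "H \<subseteq> hyp_K X" "openin X U"
  shows "openin (subtopology (vietoris X) H) {A \<in> H. A \<inter> U \<noteq> {}}"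
proof -
  have "openin (topology_generated_by (vietoris_subbasis X)) {A. A \<inter> U \<noteq> {}}"
    using assms(2) by (intro topology_generated_by_Basis) (auto simp: vietoris_subbasis_def)
  then show ?thesis
    unfolding subtopology_vietoris[OF assms(1)] openin_subtopology by blast
qed

lemma continuous_map_into_vietoris:
  assumes "H \<subseteq> hyp_K X" "f \<in> topspace Y \<rightarrow> H"
    and "\<And>U. openin X U \<Longrightarrow> openin Y {y \<in> topspace Y. f y \<subseteq> U}"
    and "\<And>U. openin X U \<Longrightarrow> openin Y {y \<in> topspace Y. f y \<inter> U \<noteq> {}}"
  shows "continuous_map Y (subtopology (vietoris X) H) f"
proof -
  have "continuous_map Y (topology_generated_by (vietoris_subbasis X)) f"
  proof (rule continuous_on_generated_topo)
    fix V assume "V \<in> vietoris_subbasis X"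
    then obtain U where "openin X U" "V = {A. A \<subseteq> U} \<or> V = {A. A \<inter> U \<noteq> {}}"
      by (auto simp: vietoris_subbasis_def)
    moreover have "f -` V \<inter> topspace Y = {y \<in> topspace Y. f y \<in> V}"
      by blast
    ultimately show "openin Y (f -` V \<inter> topspace Y)"
      using assms(3,4) by auto
  next
    show "f ` topspace Y \<subseteq> \<Union> (vietoris_subbasis X)"
      using assms(2) topspace_subtopology_vietoris[OF assms(1)]
      by (auto simp: subtopology_vietoris[OF assms(1)])
  qed
  then show ?thesis
    using assms(2) by (simp add: subtopology_vietoris[OF assms(1)] continuous_map_in_subtopology)
qed

lemma continuous_map_vietoris_insert:
  assumes "H \<subseteq> hyp_K X" "\<And>x. x \<in> topspace X \<Longrightarrow> insert x K \<in> H"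
  shows "continuous_map X (subtopology (vietoris X) H) (\<lambda>x. insert x K)"
proof (rule continuous_map_into_vietoris[OF assms(1)])
  fix U assume U: "openin X U"
  have "{x \<in> topspace X. insert x K \<subseteq> U} = (if K \<subseteq> U then U else {})"
    using openin_subset[OF U] by auto
  then show "openin X {x \<in> topspace X. insert x K \<subseteq> U}"
    using U by simp
  have "{x \<in> topspace X. insert x K \<inter> U \<noteq> {}} = (if K \<inter> U = {} then U else topspace X)"
    using openin_subset[OF U] by auto
  then show "openin X {x \<in> topspace X. insert x K \<inter> U \<noteq> {}}"
    using U by simp
qed (use assms(2) in auto)

lemma compactin_Sup_image:
  assumes "compactin X A" "A \<noteq> {}" "continuous_map X euclideanreal g"
  shows "bdd_above (g ` A)" "Sup (g ` A) \<in> g ` A"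
proof -
  have "compact (g ` A)"
    using image_compactin[OF assms(1,3)] by simp
  then show bdd: "bdd_above (g ` A)"
    by (simp add: bounded_imp_bdd_above compact_imp_bounded)
  show "Sup (g ` A) \<in> g ` A"
    using closed_contains_Sup[OF _ bdd] compact_imp_closed[OF \<open>compact (g ` A)\<close>] assms(2) by blast
qed

lemma continuous_map_vietoris_Sup:
  assumes "H \<subseteq> hyp_K X" "continuous_map X euclideanreal g"
  shows "continuous_map (subtopology (vietoris X) H) euclideanreal (\<lambda>A. Sup (g ` A))"
  unfolding continuous_map_upper_lower_semicontinuous_lt topspace_subtopology_vietoris[OF assms(1)]
proof (intro allI conjI)
  fix a :: real
  have A: "compactin X A" "A \<noteq> {}" "A \<subseteq> topspace X" if "A \<in> H" for A
    using that assms(1) compactin_subset_topspace by (auto simp: hyp_K_def)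
  have "a < Sup (g ` A) \<longleftrightarrow> A \<inter> {x \<in> topspace X. a < g x} \<noteq> {}" if "A \<in> H" for A
    using A[OF that] compactin_Sup_image[OF A(1,2)[OF that] assms(2)] by (auto simp: less_cSup_iff)
  then have "{A \<in> H. a < Sup (g ` A)} = {A \<in> H. A \<inter> {x \<in> topspace X. a < g x} \<noteq> {}}"
    by blast
  then show "openin (subtopology (vietoris X) H) {A \<in> H. a < Sup (g ` A)}"
    using openin_vietoris_lower[OF assms(1)] assms(2)
    by (simp add: continuous_map_upper_lower_semicontinuous_lt)
  have "Sup (g ` A) < a \<longleftrightarrow> A \<subseteq> {x \<in> topspace X. g x < a}" if "A \<in> H" for A
    using A[OF that] compactin_Sup_image[OF A(1,2)[OF that] assms(2)]
    by (auto, metis cSup_upper imageI le_less_trans)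
  then have "{A \<in> H. Sup (g ` A) < a} = {A \<in> H. A \<subseteq> {x \<in> topspace X. g x < a}}"
    by blast
  then show "openin (subtopology (vietoris X) H) {A \<in> H. Sup (g ` A) < a}"
    using openin_vietoris_upper[OF assms(1)] assms(2)
    by (simp add: continuous_map_upper_lower_semicontinuous_lt)
qed

lemma continuous_map_vietoris_Inf:
  assumes "H \<subseteq> hyp_K X" "continuous_map X euclideanreal g"
  shows "continuous_map (subtopology (vietoris X) H) euclideanreal (\<lambda>A. Inf (g ` A))"
proof -
  have "continuous_map X euclideanreal (\<lambda>x. - g x)"
    using assms(2) by (rule continuous_map_minus)
  then have "continuous_map (subtopology (vietoris X) H) euclideanreal (\<lambda>A. - Sup ((\<lambda>x. - g x) ` A))"
    using continuous_map_vietoris_Sup[OF assms(1)] continuous_map_minus by blast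
  then show ?thesis
    by (simp add: Inf_real_def image_image)
qed

lemma cozero_set_in_positive:
  assumes "continuous_map Y euclideanreal f"
  shows "cozero_set_in Y {y \<in> topspace Y. 0 < f y}"
  unfolding cozero_set_in_def
proof (intro exI conjI)
  show "continuous_map Y euclideanreal (\<lambda>y. max 0 (f y))"
    using assms by (intro continuous_map_real_max) auto
qed auto

lemma F'_space_disjoint_closures_positive:
  assumes "F'_space Y" "continuous_map Y euclideanreal f" "continuous_map Y euclideanreal h"
    and "\<And>y. y \<in> topspace Y \<Longrightarrow> \<not> (0 < f y \<and> 0 < h y)"
  shows "Y closure_of {y \<in> topspace Y. 0 < f y} \<inter> Y closure_of {y \<in> topspace Y. 0 < h y} = {}"
  using assms cozero_set_in_positive unfolding F'_space_def by blast

theorem proposition3p6: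
  fixes X :: "'a topology" and H :: "'a set set"
  assumes "tychonoff_space X"
    and "hyp_F2 X \<subseteq> H" and "H \<subseteq> hyp_K X"
    and "F'_space (subtopology (vietoris X) H)"
  shows "p_space X"
proof (rule ccontr)
  assume "\<not> p_space X"
  then obtain p g where p: "p \<in> topspace X" and g: "continuous_map X euclideanreal g" "g p = 0"
    and p_closure: "p \<in> X closure_of {x \<in> topspace X. 0 < g x}"
    using not_p_space_witness assms(1) unfolding tychonoff_space_def by blast
  define HS where "HS = subtopology (vietoris X) H"
  define spread where "spread A = Sup (g ` A) - 2 * Inf (g ` A)" for A
  have "continuous_map HS euclideanreal spread"
    unfolding HS_def spread_def
    by (intro continuous_map_diff continuous_map_real_mult_left
        continuous_map_vietoris_Sup continuous_map_vietoris_Inf assms(3) g(1))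
  then have disjoint: "HS closure_of {A \<in> H. 0 < - spread A} \<inter> HS closure_of {A \<in> H. 0 < spread A} = {}"
    using F'_space_disjoint_closures_positive[of HS "\<lambda>A. - spread A" spread] assms(4)
    unfolding HS_def topspace_subtopology_vietoris[OF assms(3)]
    by (simp add: continuous_map_minus)
  define S where "S = {x \<in> topspace X. 0 < g x}"
  have insert_in_H: "insert x K \<in> H" if "x \<in> topspace X" "K \<subseteq> {p}" for x K
    using assms(2) that p by (auto simp: hyp_F2_def card_insert_if subset_singleton_iff)
  have closure_image: "insert p K \<in> HS closure_of (\<lambda>x. insert x K) ` S" if "K \<subseteq> {p}" for K
    using continuous_map_image_closure_subset[OF continuous_map_vietoris_insert[OF assms(3)]]
      insert_in_H[OF _ that] p_closure unfolding HS_def S_def by blast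
  have "(\<lambda>x. {x}) ` S \<subseteq> {A \<in> H. 0 < - spread A}"
    using insert_in_H[of _ "{}"] by (auto simp: S_def spread_def)
  then have "{p} \<in> HS closure_of {A \<in> H. 0 < - spread A}"
    using closure_image[of "{}"] closure_of_mono by blast
  moreover have "(\<lambda>x. {x, p}) ` S \<subseteq> {A \<in> H. 0 < spread A}"
    using insert_in_H[of _ "{p}"] g(2)
    by (auto simp: S_def spread_def cSup_insert cInf_insert inf_min sup_max)
  then have "{p} \<in> HS closure_of {A \<in> H. 0 < spread A}"
    using closure_image[of "{p}"] closure_of_mono by fastforce
  ultimately show False
    using disjoint by blast
qed

end
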